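(* Let $G$ be a connected chordal graph. Then $BI_d(G)$ is contractible for all integers $d\geq 2$.
   Context: All graphs are finite and simple; $\alpha(G)$ is the independence number and $G[S]$ the induced subgraph on $S$. $BI_d(G)=\{\sigma\subseteq V(G):\ \alpha(G[\sigma])<d\}$. A graph is chordal if it has no induced cycle of length at least $4$. *)

theory Defs
  imports "HOL-Analysis.Analysis"
begin

definition simple_graph :: "'a set \<Rightarrow> ('a \<Rightarrow> 'a \<Rightarrow> bool) \<Rightarrow> bool" where
  "simple_graph V E \<longleftrightarrow> finite V \<and> (\<forall>x y. E x y \<longrightarrow> x \<in> V \<and> y \<in> V)
     \<and> (\<forall>x y. E x y \<longrightarrow> E y x) \<and> (\<forall>x. \<not> E x x)"

definition connected_graph :: "'a set \<Rightarrow> ('a \<Rightarrow> 'a \<Rightarrow> bool) \<Rightarrow> bool" where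
  "connected_graph V E \<longleftrightarrow> V \<noteq> {} \<and> (\<forall>x\<in>V. \<forall>y\<in>V. E\<^sup>*\<^sup>* x y)"

definition induced_cycle :: "'a set \<Rightarrow> ('a \<Rightarrow> 'a \<Rightarrow> bool) \<Rightarrow> 'a list \<Rightarrow> bool" where
  "induced_cycle V E c \<longleftrightarrow> distinct c \<and> set c \<subseteq> V \<and>
     (\<forall>i<length c. \<forall>j<length c.
        E (c!i) (c!j) \<longleftrightarrow> (j = Suc i mod length c \<or> i = Suc j mod length c))"

definition chordal :: "'a set \<Rightarrow> ('a \<Rightarrow> 'a \<Rightarrow> bool) \<Rightarrow> bool" where
  "chordal V E \<longleftrightarrow> \<not> (\<exists>c. length c \<ge> 4 \<and> induced_cycle V E c)"

definition independent :: "('a \<Rightarrow> 'a \<Rightarrow> bool) \<Rightarrow> 'a set \<Rightarrow> bool" where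
  "independent E S \<longleftrightarrow> (\<forall>x\<in>S. \<forall>y\<in>S. \<not> E x y)"

definition indep_num :: "('a \<Rightarrow> 'a \<Rightarrow> bool) \<Rightarrow> 'a set \<Rightarrow> nat" where
  "indep_num E S = Max (card ` {T. T \<subseteq> S \<and> independent E T})"

definition BI :: "nat \<Rightarrow> 'a set \<Rightarrow> ('a \<Rightarrow> 'a \<Rightarrow> bool) \<Rightarrow> 'a set set" where
  "BI d V E = {\<sigma>. \<sigma> \<subseteq> V \<and> indep_num E \<sigma> < d}"

text \<open>Geometric realization of a finite abstract simplicial complex K on vertex
  type 'a: the points f :: 'a \<Rightarrow> real (barycentric coordinates) that are
  nonnegative, sum to 1, and whose support is a face of K.  It carries the
  subspace topology of the product topology on 'a \<Rightarrow> real.\<close>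
definition geom_realization :: "'a set set \<Rightarrow> ('a \<Rightarrow> real) set" where
  "geom_realization K = {f. (\<forall>x. f x \<ge> 0) \<and> {x. f x \<noteq> 0} \<in> K
      \<and> finite {x. f x \<noteq> 0} \<and> sum f {x. f x \<noteq> 0} = 1}"

end

theory Submission
  imports Defs
begin

(* A connected chordal graph G with at least two vertices has a simplicial vertex v,
   i.e. one whose neighbourhood is a clique (Dirac), and v has some neighbour u. In an independent
   set u can always be replaced by v, so adding u to a face of BI_d(G) containing v does not raise
   the independence number: v is dominated by u. Sliding the barycentric weight of v onto u then
   deformation-retracts |BI_d(G)| onto the realization of the faces avoiding v, which is
   |BI_d(G - v)|. Since G - v is again connected and chordal, induction on the number of vertices
   reduces everything to a single vertex, where the realization is a point. *)

definition slide :: "'a \<Rightarrow> 'a \<Rightarrow> real \<Rightarrow> ('a \<Rightarrow> real) \<Rightarrow> 'a \<Rightarrow> real" where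
  "slide u v t f x = f x + (if x = u then t * f v else 0) - (if x = v then t * f v else 0)"

lemma continuous_on_slide:
  assumes "continuous_on S \<tau>" "continuous_on S \<phi>"
  shows "continuous_on S (\<lambda>x. slide u v (\<tau> x) (\<phi> x))"
proof (rule continuous_on_coordinatewise_then_product)
  have coord: "continuous_on S (\<lambda>x. \<phi> x i)" for i
    using assms(2) by (rule continuous_on_product_then_coordinatewise)
  show "continuous_on S (\<lambda>x. slide u v (\<tau> x) (\<phi> x) i)" for i
    unfolding slide_def
    by (cases "i = u"; cases "i = v"; simp; intro continuous_intros coord assms(1))
qed

lemma slide_0 [simp]: "slide u v 0 f = f"
  by (simp add: slide_def fun_eq_iff)

lemma slide_eq_self: "f v = 0 \<Longrightarrow> slide u v t f = f"
  by (auto simp: slide_def fun_eq_iff)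

lemma slide_1_vanishes: "u \<noteq> v \<Longrightarrow> slide u v 1 f v = 0"
  by (simp add: slide_def)

definition dominated_by :: "'a set set \<Rightarrow> 'a \<Rightarrow> 'a \<Rightarrow> bool" where
  "dominated_by K v u \<longleftrightarrow> (\<forall>\<sigma>\<in>K. v \<in> \<sigma> \<longrightarrow> insert u \<sigma> \<in> K)"

lemma slide_in_geom_realization:
  assumes down: "\<forall>\<sigma>\<in>K. Pow \<sigma> \<subseteq> K" and dom: "dominated_by K v u"
    and uv: "u \<noteq> v" and f: "f \<in> geom_realization K" and t: "0 \<le> t" "t \<le> 1"
  shows "slide u v t f \<in> geom_realization K"
proof (cases "f v = 0")
  case True
  then show ?thesis using f by (simp add: slide_eq_self)
next
  case False
  let ?g = "slide u v t f" and ?S = "insert u {x. f x \<noteq> 0}"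
  have f_nonneg: "\<And>x. f x \<ge> 0" and f_face: "{x. f x \<noteq> 0} \<in> K"
    and f_fin: "finite {x. f x \<noteq> 0}" and f_sum: "sum f {x. f x \<noteq> 0} = 1"
    using f unfolding geom_realization_def by auto
  have "t * f v \<le> f v"
    using t f_nonneg[of v] by (simp add: mult_left_le_one_le)
  then have g_nonneg: "\<forall>x. ?g x \<ge> 0"
    using t f_nonneg uv by (auto simp: slide_def)
  have "{x. ?g x \<noteq> 0} \<subseteq> ?S"
    using uv by (auto simp: slide_def)
  moreover have "?S \<in> K"
    using dom f_face False unfolding dominated_by_def by simp
  ultimately have g_face: "{x. ?g x \<noteq> 0} \<in> K" and g_fin: "finite {x. ?g x \<noteq> 0}"
    using down f_fin by (auto intro: finite_subset)
  have "sum ?g {x. ?g x \<noteq> 0} = sum ?g ?S"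
    using \<open>{x. ?g x \<noteq> 0} \<subseteq> ?S\<close> f_fin by (intro sum.mono_neutral_left) auto
  also have "\<dots> = sum f ?S"
    using f_fin False by (simp add: slide_def sum.distrib sum_subtractf)
  also have "\<dots> = 1"
    using f_sum f_fin by (subst sum.mono_neutral_right[of ?S]) auto
  finally show ?thesis
    unfolding geom_realization_def using g_nonneg g_face g_fin by simp
qed

lemma geom_realization_homotopy_eqv_delete_dominated:
  assumes down: "\<forall>\<sigma>\<in>K. Pow \<sigma> \<subseteq> K" and dom: "dominated_by K v u" and uv: "u \<noteq> v"
  shows "geom_realization K homotopy_eqv geom_realization {\<sigma>\<in>K. v \<notin> \<sigma>}"
proof -
  let ?X = "geom_realization K" and ?Y = "geom_realization {\<sigma>\<in>K. v \<notin> \<sigma>}"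
  have Y_eq: "?Y = {f \<in> ?X. f v = 0}"
    unfolding geom_realization_def by auto
  have slide_X: "slide u v t f \<in> ?X" if "t \<in> {0..1}" "f \<in> ?X" for t f
    using slide_in_geom_realization[OF down dom uv] that by simp
  have "continuous_on ({0..1} \<times> ?X) (\<lambda>p. slide u v (fst p) (snd p))"
    by (intro continuous_on_slide continuous_on_fst continuous_on_snd continuous_on_id)
  then have "homotopic_with_canon (\<lambda>x. True) ?X ?X id (slide u v 1)"
    unfolding homotopic_with_def
    by (intro exI[of _ "\<lambda>p. slide u v (fst p) (snd p)"]) (auto intro!: slide_X simp: Pi_iff)
  then have "homotopic_with_canon (\<lambda>x. True) ?X ?X (slide u v 1) id"
    by (rule homotopic_with_symD)
  moreover have "retraction_maps (top_of_set ?X) (top_of_set ?Y) (slide u v 1) id"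
    unfolding retraction_maps_def
    using slide_X slide_1_vanishes[OF uv]
    by (auto intro!: continuous_on_slide continuous_on_const continuous_on_id
        simp: Y_eq slide_eq_self Pi_iff)
  ultimately show ?thesis
    by (rule deformation_retract_imp_homotopy_equivalent_space)
qed

lemma simple_graphD:
  assumes "simple_graph V E"
  shows "finite V" and "E a b \<Longrightarrow> a \<in> V" and "E a b \<Longrightarrow> b \<in> V"
    and "E a b \<Longrightarrow> E b a" and "\<not> E a a"
  using assms unfolding simple_graph_def by auto

definition clique :: "('a \<Rightarrow> 'a \<Rightarrow> bool) \<Rightarrow> 'a set \<Rightarrow> bool" where
  "clique E A \<longleftrightarrow> (\<forall>a\<in>A. \<forall>b\<in>A. a \<noteq> b \<longrightarrow> E a b)"

definition simplicial :: "('a \<Rightarrow> 'a \<Rightarrow> bool) \<Rightarrow> 'a \<Rightarrow> bool" where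
  "simplicial E v \<longleftrightarrow> clique E {w. E v w}"

definition induced_edges :: "('a \<Rightarrow> 'a \<Rightarrow> bool) \<Rightarrow> 'a set \<Rightarrow> 'a \<Rightarrow> 'a \<Rightarrow> bool" where
  "induced_edges E W a b \<longleftrightarrow> E a b \<and> a \<in> W \<and> b \<in> W"

lemma indep_num_ge:
  assumes "finite S" "T \<subseteq> S" "independent E T"
  shows "card T \<le> indep_num E S"
  unfolding indep_num_def using assms by (intro Max_ge) auto

lemma indep_num_le:
  assumes "finite S" "\<And>T. T \<subseteq> S \<Longrightarrow> independent E T \<Longrightarrow> card T \<le> k"
  shows "indep_num E S \<le> k"
proof -
  have "{} \<in> {T. T \<subseteq> S \<and> independent E T}"
    by (simp add: independent_def)
  then show ?thesis
    unfolding indep_num_def using assms by (intro Max.boundedI) auto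
qed

lemma indep_num_mono:
  assumes "finite S" "R \<subseteq> S"
  shows "indep_num E R \<le> indep_num E S"
  using assms by (intro indep_num_le indep_num_ge) (auto intro: finite_subset)

lemma independent_swap_simplicial:
  assumes sym: "\<And>a b. E a b \<Longrightarrow> E b a" and irr: "\<And>a. \<not> E a a"
    and v: "simplicial E v" "E v u" and T: "independent E T" "u \<in> T"
  shows "independent E (insert v (T - {u}))" and "v \<notin> T"
proof -
  have "\<not> E v c" if "c \<in> T - {u}" for c
    using that v T unfolding simplicial_def clique_def independent_def by blast
  then show "independent E (insert v (T - {u}))"
    using T(1) sym irr unfolding independent_def by blast
  show "v \<notin> T"
    using T v(2) unfolding independent_def by blast
qed

lemma indep_num_insert_simplicial_nbr:
  assumes sym: "\<And>a b. E a b \<Longrightarrow> E b a" and irr: "\<And>a. \<not> E a a"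
    and v: "simplicial E v" "E v u" and \<sigma>: "finite \<sigma>" "v \<in> \<sigma>"
  shows "indep_num E (insert u \<sigma>) = indep_num E \<sigma>"
proof (rule antisym)
  show "indep_num E (insert u \<sigma>) \<le> indep_num E \<sigma>"
  proof (rule indep_num_le)
    fix T assume T: "T \<subseteq> insert u \<sigma>" "independent E T"
    show "card T \<le> indep_num E \<sigma>"
    proof (cases "u \<in> T")
      case False
      then show ?thesis using T \<sigma> by (intro indep_num_ge) auto
    next
      case True
      note swap = independent_swap_simplicial[OF sym irr v T(2) True]
      have "finite T" using T(1) \<sigma>(1) by (meson finite_insert finite_subset)
      then have "card T = card (insert v (T - {u}))"
        using True swap(2) by (metis card_Suc_Diff1 card_insert_disjoint finite_Diff Diff_iff)
      also have "\<dots> \<le> indep_num E \<sigma>"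
        using T(1) \<sigma> swap(1) by (intro indep_num_ge) auto
      finally show ?thesis .
    qed
  qed (use \<sigma> in simp)
  show "indep_num E \<sigma> \<le> indep_num E (insert u \<sigma>)"
    using \<sigma> by (intro indep_num_mono) auto
qed

lemma BI_downward_closed:
  assumes "finite V"
  shows "\<forall>\<sigma>\<in>BI d V E. Pow \<sigma> \<subseteq> BI d V E"
proof (intro ballI subsetI)
  fix \<sigma> \<tau> assume \<sigma>: "\<sigma> \<in> BI d V E" and "\<tau> \<in> Pow \<sigma>"
  then have "\<tau> \<subseteq> \<sigma>" "\<sigma> \<subseteq> V" "indep_num E \<sigma> < d"
    by (auto simp: BI_def)
  moreover have "indep_num E \<tau> \<le> indep_num E \<sigma>"
    using \<open>\<tau> \<subseteq> \<sigma>\<close> \<open>\<sigma> \<subseteq> V\<close> assms by (intro indep_num_mono) (auto intro: finite_subset)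
  ultimately show "\<tau> \<in> BI d V E"
    by (auto simp: BI_def)
qed

lemma BI_dominated_by_simplicial_nbr:
  assumes "simple_graph V E" "simplicial E v" "E v u"
  shows "dominated_by (BI d V E) v u"
  unfolding dominated_by_def
proof (intro ballI impI)
  fix \<sigma> assume "\<sigma> \<in> BI d V E" "v \<in> \<sigma>"
  moreover have "finite \<sigma>" "u \<in> V"
    using \<open>\<sigma> \<in> BI d V E\<close> simple_graphD[OF assms(1)] assms(3)
    by (auto simp: BI_def intro: finite_subset)
  ultimately show "insert u \<sigma> \<in> BI d V E"
    using indep_num_insert_simplicial_nbr[OF simple_graphD(4,5)[OF assms(1)] assms(2,3)]
    by (auto simp: BI_def)
qed

lemma BI_induced:
  assumes "W \<subseteq> V"
  shows "BI d W (induced_edges E W) = {\<sigma>\<in>BI d V E. \<sigma> \<subseteq> W}"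
proof -
  have "independent (induced_edges E W) T = independent E T" if "T \<subseteq> W" for T
    using that unfolding independent_def induced_edges_def by blast
  then have "indep_num (induced_edges E W) \<sigma> = indep_num E \<sigma>" if "\<sigma> \<subseteq> W" for \<sigma>
  proof -
    have "{T. T \<subseteq> \<sigma> \<and> independent (induced_edges E W) T} = {T. T \<subseteq> \<sigma> \<and> independent E T}"
      using that \<open>\<And>T. T \<subseteq> W \<Longrightarrow> _\<close> by blast
    then show ?thesis
      by (simp add: indep_num_def)
  qed
  then show ?thesis
    using assms unfolding BI_def by auto
qed

lemma simple_graph_induced:
  "simple_graph V E \<Longrightarrow> W \<subseteq> V \<Longrightarrow> simple_graph W (induced_edges E W)"
  unfolding simple_graph_def induced_edges_def by (auto intro: finite_subset)

lemma chordal_induced: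
  assumes "chordal V E" "W \<subseteq> V"
  shows "chordal W (induced_edges E W)"
  unfolding chordal_def
proof
  assume "\<exists>c. 4 \<le> length c \<and> induced_cycle W (induced_edges E W) c"
  then obtain c where c: "4 \<le> length c" "induced_cycle W (induced_edges E W) c"
    by blast
  then have "set c \<subseteq> W"
    by (simp add: induced_cycle_def)
  then have "induced_edges E W (c!i) (c!j) = E (c!i) (c!j)" if "i < length c" "j < length c" for i j
    using that nth_mem unfolding induced_edges_def by blast
  then have "induced_cycle V E c"
    using c(2) \<open>set c \<subseteq> W\<close> assms(2) unfolding induced_cycle_def by auto
  then show False
    using assms(1) c(1) unfolding chordal_def by blast
qed

lemma connected_graph_has_nbr:
  assumes "connected_graph V E" "v \<in> V" "V \<noteq> {v}"
  obtains u where "E v u"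
proof -
  obtain z where "z \<in> V" "z \<noteq> v"
    using assms(2,3) by blast
  then have "E\<^sup>*\<^sup>* v z"
    using assms(1,2) unfolding connected_graph_def by blast
  then show ?thesis
    using \<open>z \<noteq> v\<close> that by (metis converse_rtranclpE)
qed

lemma nbrs_simplicial_adjacent_in_delete:
  assumes sg: "simple_graph V E" and v: "simplicial E v" and "E v a" "E v b" "a \<noteq> b"
  shows "induced_edges E (V - {v}) a b"
  using assms simple_graphD[OF sg] unfolding simplicial_def clique_def induced_edges_def by blast

lemma connected_graph_delete_simplicial:
  assumes sg: "simple_graph V E" and co: "connected_graph V E"
    and v: "simplicial E v" "E v u"
  shows "connected_graph (V - {v}) (induced_edges E (V - {v}))"
proof -
  let ?R = "induced_edges E (V - {v})"
  note G = simple_graphD[OF sg]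
  have nbrs_linked: "?R\<^sup>*\<^sup>* a b" if "E v a" "E v b" for a b
    using nbrs_simplicial_adjacent_in_delete[OF sg v(1) that] by (cases "a = b") auto
  (* Replacing v by u turns walks of G into walks of G - v, as the neighbours of v form a clique. *)
  define bypass where "bypass z = (if z = v then u else z)" for z
  have edge: "?R\<^sup>*\<^sup>* (bypass a) (bypass b)" if "E a b" for a b
    using that nbrs_linked[of u b] nbrs_linked[of a u] r_into_rtranclp[of ?R a b] v(2) G(2-5)
    by (cases "a = v"; cases "b = v") (auto simp: bypass_def induced_edges_def)
  have walk: "?R\<^sup>*\<^sup>* (bypass x) (bypass y)" if "E\<^sup>*\<^sup>* x y" for x y
    using that by (induction rule: rtranclp_induct) (auto intro: rtranclp_trans edge)
  have "?R\<^sup>*\<^sup>* x y" if "x \<in> V - {v}" "y \<in> V - {v}" for x y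
  proof -
    have "E\<^sup>*\<^sup>* x y"
      using that co unfolding connected_graph_def by blast
    then show ?thesis
      using walk[of x y] that unfolding bypass_def by simp
  qed
  moreover have "u \<in> V - {v}"
    using G(3,5) v(2) by blast
  ultimately show ?thesis
    unfolding connected_graph_def by blast
qed

definition nbhd :: "('a \<Rightarrow> 'a \<Rightarrow> bool) \<Rightarrow> 'a set \<Rightarrow> 'a set" where
  "nbhd E C = {s. s \<notin> C \<and> (\<exists>c\<in>C. E s c)}"

definition component_of :: "('a \<Rightarrow> 'a \<Rightarrow> bool) \<Rightarrow> 'a set \<Rightarrow> 'a \<Rightarrow> 'a set" where
  "component_of E W y = {z. (induced_edges E W)\<^sup>*\<^sup>* y z}"

definition walk_via :: "('a \<Rightarrow> 'a \<Rightarrow> bool) \<Rightarrow> 'a set \<Rightarrow> 'a \<Rightarrow> 'a \<Rightarrow> 'a list \<Rightarrow> bool" where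
  "walk_via E W s t p \<longleftrightarrow> 2 \<le> length p \<and> p!0 = s \<and> p!(length p - 1) = t \<and>
     (\<forall>i. 0 < i \<and> i < length p - 1 \<longrightarrow> p!i \<in> W) \<and> (\<forall>i. Suc i < length p \<longrightarrow> E (p!i) (p!Suc i))"

definition chordless :: "('a \<Rightarrow> 'a \<Rightarrow> bool) \<Rightarrow> 'a list \<Rightarrow> bool" where
  "chordless E p \<longleftrightarrow> (\<forall>i<length p. \<forall>j<length p. E (p!i) (p!j) \<longleftrightarrow> j = Suc i \<or> i = Suc j)"

lemma walk_via_Cons:
  assumes "walk_via E W c t p" "c \<in> W" "E s c"
  shows "walk_via E W s t (s # p)"
proof -
  have p: "2 \<le> length p" "p!0 = c" "p!(length p - 1) = t"
    "\<And>i. 0 < i \<Longrightarrow> i < length p - 1 \<Longrightarrow> p!i \<in> W" "\<And>i. Suc i < length p \<Longrightarrow> E (p!i) (p!Suc i)"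
    using assms(1) unfolding walk_via_def by auto
  have "(s # p)!i \<in> W" if "0 < i" "i < length p" for i
    using that p(2) p(4)[of "i - 1"] assms(2) by (cases "i = 1") (auto simp: nth_Cons')
  moreover have "E ((s # p)!i) ((s # p)!Suc i)" if "Suc i < Suc (length p)" for i
    using that p(2) p(5)[of "i - 1"] assms(3) by (cases i) auto
  ultimately show ?thesis
    using p(1-3) unfolding walk_via_def by (auto simp: nth_Cons')
qed

lemma walk_via_exists:
  assumes "(induced_edges E W)\<^sup>*\<^sup>* c c'" "c \<in> W" "E s c" "E c' t"
  shows "\<exists>p. walk_via E W s t p"
  using assms
proof (induction arbitrary: s rule: converse_rtranclp_induct)
  case base
  have "walk_via E W s t [s, c', t]"
    using base unfolding walk_via_def by (auto simp: less_Suc_eq nth_Cons')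
  then show ?case ..
next
  case (step c c1)
  then obtain p where "walk_via E W c t p"
    unfolding induced_edges_def by blast
  then have "walk_via E W s t (s # p)"
    using step.prems(1,2) by (rule walk_via_Cons)
  then show ?case ..
qed

lemma nth_take_Suc_append_drop:
  assumes "i < j" "j < length p" "k < Suc i + (length p - j)"
  shows "(take (Suc i) p @ drop j p)!k = (if k \<le> i then p!k else p!(k - Suc i + j))"
  using assms by (auto simp: nth_append min_def) (simp add: add.commute)

lemma walk_via_shortcut:
  assumes p: "walk_via E W s t p" and ij: "Suc i < j" "j < length p" and chord: "E (p!i) (p!j)"
  shows "walk_via E W s t (take (Suc i) p @ drop j p)"
proof -
  let ?q = "take (Suc i) p @ drop j p"
  have p': "2 \<le> length p" "p!0 = s" "p!(length p - 1) = t"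
    "\<And>k. 0 < k \<Longrightarrow> k < length p - 1 \<Longrightarrow> p!k \<in> W" "\<And>k. Suc k < length p \<Longrightarrow> E (p!k) (p!Suc k)"
    using p unfolding walk_via_def by auto
  have len: "length ?q = Suc i + (length p - j)"
    using ij by simp
  have nth: "?q!k = (if k \<le> i then p!k else p!(k - Suc i + j))" if "k < length ?q" for k
    using that ij len by (intro nth_take_Suc_append_drop) auto
  have "?q!k \<in> W" if "0 < k" "k < length ?q - 1" for k
    using that nth[of k] p'(4)[of k] p'(4)[of "k - Suc i + j"] ij len by (cases "k \<le> i") auto
  moreover have "E (?q!k) (?q!Suc k)" if "Suc k < length ?q" for k
    using that nth[of k] nth[of "Suc k"] p'(5)[of k] p'(5)[of "k - Suc i + j"] chord ij len
    by (cases "Suc k \<le> i"; cases "k = i") (auto simp: Suc_diff_Suc)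
  moreover have "?q!0 = s"
    using nth[of 0] len ij p'(2) by simp
  moreover have "?q!(length ?q - 1) = t"
  proof -
    have "?q \<noteq> []"
      using len by auto
    then have "?q!(length ?q - 1) = last ?q"
      by (simp add: last_conv_nth)
    also have "\<dots> = last p"
      using ij by simp
    also have "\<dots> = t"
      using ij(2) p'(3) last_conv_nth[of p] by fastforce
    finally show ?thesis .
  qed
  ultimately show ?thesis
    unfolding walk_via_def using len ij by simp
qed

lemma shortest_walk_via_chordless:
  assumes sym: "\<And>a b. E a b \<Longrightarrow> E b a" and irr: "\<And>a. \<not> E a a"
    and p: "walk_via E W s t p" and shortest: "\<And>q. walk_via E W s t q \<Longrightarrow> length p \<le> length q"
  shows "chordless E p"
proof -
  have no_chord: "j = Suc i" if "i < j" "j < length p" "E (p!i) (p!j)" for i j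
  proof (rule ccontr)
    assume "j \<noteq> Suc i"
    then have "walk_via E W s t (take (Suc i) p @ drop j p)"
      using that by (intro walk_via_shortcut[OF p]) auto
    then show False
      using shortest that \<open>j \<noteq> Suc i\<close> by fastforce
  qed
  have edge: "E (p!i) (p!Suc i)" if "Suc i < length p" for i
    using p that unfolding walk_via_def by blast
  show ?thesis
    unfolding chordless_def
  proof (intro allI impI)
    fix i j assume "i < length p" "j < length p"
    then show "E (p!i) (p!j) \<longleftrightarrow> j = Suc i \<or> i = Suc j"
      using no_chord[of i j] no_chord[of j i] edge[of i] edge[of j] sym irr
      by (cases i j rule: linorder_cases) auto
  qed
qed

lemma chordless_distinct:
  assumes p: "chordless E p" "p!0 \<noteq> p!(length p - 1)"
  shows "distinct p"
proof -
  have adj: "E (p!i) (p!j) \<longleftrightarrow> j = Suc i \<or> i = Suc j" if "i < length p" "j < length p" for i j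
    using p(1) that unfolding chordless_def by blast
  have "p!i \<noteq> p!j" if "i < j" "j < length p" for i j
  proof
    assume eq: "p!i = p!j"
    show False
    proof (cases i)
      case 0
      show False
      proof (cases "j = length p - 1")
        case True
        then show ?thesis using eq 0 p(2) by simp
      next
        case False
        then have "Suc j < length p" "p \<noteq> []"
          using that by auto
        then have "E (p!0) (p!Suc j)"
          using adj[of j "Suc j"] eq 0 that by simp
        then show False
          using adj[of 0 "Suc j"] \<open>Suc j < length p\<close> \<open>p \<noteq> []\<close> that 0 by simp
      qed
    next
      case (Suc i')
      then have "E (p!i') (p!j)"
        using adj[of i' i] eq that by simp
      then show False
        using adj[of i' j] Suc that by simp
    qed
  qed
  then show ?thesis
    unfolding distinct_conv_nth by (metis linorder_neqE_nat)
qed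

lemma induced_cycle_Cons_chordless:
  assumes sym: "\<And>a b. E a b \<Longrightarrow> E b a" and irr: "\<And>a. \<not> E a a"
    and p: "chordless E p" "3 \<le> length p" "p!0 \<noteq> p!(length p - 1)" "set p \<subseteq> V"
    and x: "x \<in> V" "x \<notin> set p" "\<And>k. k < length p \<Longrightarrow> E x (p!k) \<longleftrightarrow> k = 0 \<or> k = length p - 1"
  shows "induced_cycle V E (x # p)"
proof -
  define L where "L = length p"
  have L3: "3 \<le> L"
    using p(2) L_def by simp
  have adj: "E (p!i) (p!j) \<longleftrightarrow> j = Suc i \<or> i = Suc j" if "i < L" "j < L" for i j
    using p(1) that unfolding chordless_def L_def by blast
  have wrap: "Suc (Suc k) mod Suc L = (if k = L - 1 then 0 else Suc (Suc k))" if "k < L" for k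
  proof (cases "k = L - 1")
    case True
    then have "Suc (Suc k) = Suc L"
      using L3 by simp
    then show ?thesis
      using True by simp
  qed (use that in auto)
  have one: "Suc 0 mod Suc L = 1"
    using L3 by simp
  have x_adj: "E x (p!k) \<longleftrightarrow> k = 0 \<or> k = L - 1" "E (p!k) x \<longleftrightarrow> k = 0 \<or> k = L - 1" if "k < L" for k
    using x(3)[of k] sym that L_def by blast+
  have "E ((x#p)!i) ((x#p)!j) \<longleftrightarrow> j = Suc i mod Suc L \<or> i = Suc j mod Suc L"
    if "i < Suc L" "j < Suc L" for i j
    using that x_adj adj wrap one irr by (cases i; cases j) auto
  moreover have "p \<noteq> []"
    using p(2) by (cases p) auto
  ultimately show ?thesis
    unfolding induced_cycle_def using chordless_distinct[OF p(1,3)] x(1,2) p(4) L_def by simp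
qed

lemma component_of_subset:
  assumes "y \<in> C" "\<And>c w. c \<in> C \<Longrightarrow> w \<in> W \<Longrightarrow> E c w \<Longrightarrow> w \<in> C"
  shows "component_of E W y \<subseteq> C"
proof
  fix z assume "z \<in> component_of E W y"
  then have "(induced_edges E W)\<^sup>*\<^sup>* y z"
    by (simp add: component_of_def)
  then show "z \<in> C"
    using assms by (induction rule: rtranclp_induct) (auto simp: induced_edges_def)
qed

lemma component_of_closed:
  "z \<in> component_of E W y \<Longrightarrow> E z w \<Longrightarrow> z \<in> W \<Longrightarrow> w \<in> W \<Longrightarrow> w \<in> component_of E W y"
  unfolding component_of_def induced_edges_def by (simp add: rtranclp.rtrancl_into_rtrancl)

lemma walk_via_subset:
  assumes "simple_graph V E" "walk_via E W s t p"
  shows "set p \<subseteq> V"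
proof
  fix z assume "z \<in> set p"
  then obtain k where k: "k < length p" "p!k = z"
    by (auto simp: in_set_conv_nth)
  have edges: "\<And>i. Suc i < length p \<Longrightarrow> E (p!i) (p!Suc i)"
    using assms(2) unfolding walk_via_def by auto
  show "z \<in> V"
  proof (cases "Suc k < length p")
    case True
    then show ?thesis
      using edges[of k] simple_graphD(2)[OF assms(1)] k(2) by blast
  next
    case False
    then have "k = Suc (k - 1)" "Suc (k - 1) < length p"
      using k(1) assms(2) unfolding walk_via_def by auto
    then show ?thesis
      using edges[of "k - 1"] simple_graphD(3)[OF assms(1)] k(2) by metis
  qed
qed

lemma shortest_walk_via_closes_induced_cycle:
  assumes sg: "simple_graph V E" and p: "walk_via E W s t p"
    and shortest: "\<And>q. walk_via E W s t q \<Longrightarrow> length p \<le> length q"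
    and st: "s \<noteq> t" "\<not> E s t" and x: "E x s" "E x t" "x \<notin> W" "\<forall>w\<in>W. \<not> E x w"
  shows "induced_cycle V E (x # p)" and "4 \<le> length (x # p)"
proof -
  note G = simple_graphD[OF sg]
  have ends: "2 \<le> length p" "p!0 = s" "p!(length p - 1) = t"
    and inner: "\<And>i. 0 < i \<Longrightarrow> i < length p - 1 \<Longrightarrow> p!i \<in> W"
    and edges: "\<And>i. Suc i < length p \<Longrightarrow> E (p!i) (p!Suc i)"
    using p unfolding walk_via_def by auto
  have "length p \<noteq> 2"
    using edges[of 0] ends st(2) by auto
  then have "3 \<le> length p"
    using ends(1) by simp
  then show "4 \<le> length (x # p)"
    by simp
  have x_adj: "E x (p!k) \<longleftrightarrow> k = 0 \<or> k = length p - 1" if "k < length p" for k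
    using that ends inner[of k] x(1,2,4) by (cases "0 < k \<and> k < length p - 1") auto
  have "x \<notin> set p"
  proof
    assume "x \<in> set p"
    then obtain k where "k < length p" "p!k = x"
      by (auto simp: in_set_conv_nth)
    then show False
      using x_adj[of k] inner[of k] x(3) G(5) by (cases "0 < k \<and> k < length p - 1") auto
  qed
  then show "induced_cycle V E (x # p)"
    using G(4,5) shortest_walk_via_chordless[OF _ _ p shortest] \<open>3 \<le> length p\<close> ends st(1)
      walk_via_subset[OF sg p] G(2)[OF x(1)] x_adj
    by (intro induced_cycle_Cons_chordless) auto
qed

lemma component_of_linked:
  assumes sym: "\<And>a b. E a b \<Longrightarrow> E b a"
    and "c \<in> component_of E W y" "c' \<in> component_of E W y"
  shows "(induced_edges E W)\<^sup>*\<^sup>* c c'"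
proof -
  have "symp (induced_edges E W)"
    using sym by (auto simp: symp_def induced_edges_def)
  then have "(induced_edges E W)\<^sup>*\<^sup>* c y"
    using assms(2) unfolding component_of_def by (blast dest: sympD[OF symp_rtranclp])
  then show ?thesis
    using assms(3) unfolding component_of_def by simp
qed

lemma nbhd_component_subset_nbrs:
  assumes sg: "simple_graph V E" and y: "y \<in> V - insert x {z. E x z}"
  shows "nbhd E (component_of E (V - insert x {z. E x z}) y) \<subseteq> {z. E x z}"
proof
  note G = simple_graphD[OF sg]
  define W where "W = V - insert x {z. E x z}"
  define C where "C = component_of E W y"
  have C_W: "C \<subseteq> W"
    unfolding C_def using y W_def by (intro component_of_subset) auto
  fix s assume s: "s \<in> nbhd E (component_of E (V - insert x {z. E x z}) y)"
  then obtain c where c: "c \<in> C" "E s c" "s \<notin> C"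
    unfolding nbhd_def C_def W_def by blast
  show "s \<in> {z. E x z}"
  proof (rule ccontr)
    assume not_nbr: "s \<notin> {z. E x z}"
    have "c \<in> W"
      using c(1) C_W by blast
    then have "s \<in> W"
      using not_nbr c(2) G(2)[OF c(2)] unfolding W_def by auto
    then have "s \<in> C"
      using component_of_closed[of c E W y s] c G(4) \<open>c \<in> W\<close> unfolding C_def by blast
    then show False
      using c(3) by blast
  qed
qed

lemma clique_nbhd_component:
  assumes sg: "simple_graph V E" and ch: "chordal V E"
    and y: "y \<in> V - insert x {z. E x z}"
  shows "clique E (nbhd E (component_of E (V - insert x {z. E x z}) y))"
proof -
  note G = simple_graphD[OF sg]
  define W where "W = V - insert x {z. E x z}"
  define C where "C = component_of E W y"
  have C_W: "C \<subseteq> W"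
    unfolding C_def using y W_def by (intro component_of_subset) auto
  have nbhd_adj: "E x s" if "s \<in> nbhd E C" for s
    using nbhd_component_subset_nbrs[OF sg y] that unfolding C_def W_def by blast
  show ?thesis
    unfolding clique_def C_def[symmetric] W_def[symmetric]
  proof (intro ballI impI)
    fix s t assume s: "s \<in> nbhd E C" and t: "t \<in> nbhd E C" and "s \<noteq> t"
    show "E s t"
    proof (rule ccontr)
      assume "\<not> E s t"
      obtain c c' where c: "c \<in> C" "E s c" and c': "c' \<in> C" "E t c'"
        using s t unfolding nbhd_def by blast
      then have "\<exists>p. walk_via E W s t p"
        using walk_via_exists[OF component_of_linked[of E, OF G(4)]] c c' C_W G(4)
        unfolding C_def by blast
      then obtain p where p: "walk_via E W s t p"
        and shortest: "\<And>q. walk_via E W s t q \<Longrightarrow> length p \<le> length q"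
        using ex_has_least_nat[of "walk_via E W s t" _ length] by metis
      have "x \<notin> W" "\<forall>w\<in>W. \<not> E x w"
        unfolding W_def by auto
      then have "induced_cycle V E (x # p)" "4 \<le> length (x # p)"
        using shortest_walk_via_closes_induced_cycle[OF sg p shortest \<open>s \<noteq> t\<close> \<open>\<not> E s t\<close>
            nbhd_adj[OF s] nbhd_adj[OF t]] by auto
      then show False
        using ch unfolding chordal_def by blast
    qed
  qed
qed

lemma nonadjacent_pair_dominating_nbhd:
  assumes sym: "\<And>a b. E a b \<Longrightarrow> E b a"
    and N: "clique E (nbhd E C)" and CN: "\<not> clique E (C \<union> nbhd E C)"
  obtains x y where "x \<in> C \<union> nbhd E C" "y \<in> C" "x \<noteq> y" "\<not> E x y"
    "nbhd E C \<subseteq> insert x {z. E x z}"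
proof -
  have dominates: "nbhd E C \<subseteq> insert a {z. E a z}" if "a \<in> nbhd E C" for a
    using N that unfolding clique_def by auto
  obtain a b where ab: "a \<in> C \<union> nbhd E C" "b \<in> C" "a \<noteq> b" "\<not> E a b"
  proof -
    obtain a b where ab: "a \<in> C \<union> nbhd E C" "b \<in> C \<union> nbhd E C" "a \<noteq> b" "\<not> E a b"
      using CN unfolding clique_def by blast
    show ?thesis
    proof (cases "b \<in> C")
      case True
      then show ?thesis
        using that ab by blast
    next
      case False
      then have "a \<notin> nbhd E C"
        using ab dominates by blast
      then show ?thesis
        using that[of b a] ab sym by blast
    qed
  qed
  show ?thesis
  proof (cases "nbhd E C \<subseteq> insert a {z. E a z}")
    case True
    then show ?thesis
      using that ab by blast
  next
    case False
    then obtain s where s: "s \<in> nbhd E C" "s \<noteq> a" "\<not> E a s"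
      by blast
    moreover have "a \<in> C"
      using ab(1) False dominates by blast
    moreover have "\<not> E s a"
      using s(3) sym by blast
    ultimately show ?thesis
      using that[of s a] dominates[OF s(1)] by blast
  qed
qed

lemma component_avoiding_nbrs_psubset:
  assumes sym: "\<And>a b. E a b \<Longrightarrow> E b a"
    and x: "x \<in> C \<union> nbhd E C" "nbhd E C \<subseteq> insert x {z. E x z}"
    and y: "y \<in> C" "y \<in> V - insert x {z. E x z}"
  shows "component_of E (V - insert x {z. E x z}) y \<subset> C"
proof -
  let ?W = "V - insert x {z. E x z}"
  have "component_of E ?W y \<subseteq> ?W"
    using y(2) by (intro component_of_subset) auto
  moreover have "component_of E ?W y \<subseteq> C"
  proof (rule component_of_subset[OF y(1)])
    fix c w assume "c \<in> C" "w \<in> ?W" "E c w"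
    then show "w \<in> C"
      using x(2) sym unfolding nbhd_def by blast
  qed
  moreover have "\<exists>c\<in>C. c \<notin> ?W"
    using x(1) unfolding nbhd_def by auto
  ultimately show ?thesis
    by blast
qed

lemma simplicial_vertex_in:
  assumes sg: "simple_graph V E" and ch: "chordal V E"
    and "C \<subseteq> V" "C \<noteq> {}" "clique E (nbhd E C)"
  shows "\<exists>v\<in>C. simplicial E v"
  using assms(3-5)
proof (induction "card C" arbitrary: C rule: less_induct)
  case less
  note G = simple_graphD[OF sg]
  show ?case
  proof (cases "clique E (C \<union> nbhd E C)")
    case True
    obtain v where "v \<in> C"
      using less.prems(2) by blast
    then have "{w. E v w} \<subseteq> C \<union> nbhd E C"
      using G(4) unfolding nbhd_def by blast
    then have "simplicial E v"
      using True unfolding simplicial_def clique_def by blast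
    then show ?thesis
      using \<open>v \<in> C\<close> by blast
  next
    case False
    obtain x y where xy: "x \<in> C \<union> nbhd E C" "y \<in> C" "x \<noteq> y" "\<not> E x y"
      and dom: "nbhd E C \<subseteq> insert x {z. E x z}"
      using nonadjacent_pair_dominating_nbhd[OF G(4) less.prems(3) False] by blast
    let ?C' = "component_of E (V - insert x {z. E x z}) y"
    have y: "y \<in> V - insert x {z. E x z}"
      using xy less.prems(1) by auto
    then have "?C' \<subset> C"
      using component_avoiding_nbrs_psubset[OF G(4) xy(1) dom xy(2)] by blast
    then have "card ?C' < card C"
      using less.prems(1) G(1) by (meson finite_subset psubset_card_mono)
    moreover have "?C' \<subseteq> V" "?C' \<noteq> {}"
      using \<open>?C' \<subset> C\<close> less.prems(1) unfolding component_of_def by auto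
    moreover have "clique E (nbhd E ?C')"
      using clique_nbhd_component[OF sg ch y] .
    ultimately show ?thesis
      using less.hyps \<open>?C' \<subset> C\<close> by blast
  qed
qed

lemma chordal_has_simplicial_vertex:
  assumes "simple_graph V E" "chordal V E" "V \<noteq> {}"
  obtains v where "v \<in> V" "simplicial E v"
proof -
  have "nbhd E V = {}"
    using simple_graphD(2)[OF assms(1)] unfolding nbhd_def by blast
  then show ?thesis
    using simplicial_vertex_in[OF assms(1,2) _ assms(3)] that by (auto simp: clique_def)
qed

lemma contractible_geom_realization_singleton:
  assumes "K \<subseteq> Pow {a}"
  shows "contractible (geom_realization K)"
proof -
  have "f = (\<lambda>x. if x = a then 1 else 0)" if "f \<in> geom_realization K" for f
  proof -
    have "{x. f x \<noteq> 0} \<subseteq> {a}" "sum f {x. f x \<noteq> 0} = 1"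
      using that assms unfolding geom_realization_def by auto
    then have "{x. f x \<noteq> 0} = {a}" "f a = 1"
      by (auto simp: subset_singleton_iff)
    then show ?thesis
      by (auto simp: fun_eq_iff)
  qed
  then have "topspace (top_of_set (geom_realization K)) \<subseteq> {\<lambda>x. if x = a then 1 else 0}"
    by auto
  then have "contractible_space (top_of_set (geom_realization K))"
    by (rule contractible_space_subset_singleton)
  then show ?thesis
    by simp
qed

lemma contractible_BI_delete_simplicial:
  assumes sg: "simple_graph V E" and v: "simplicial E v" "E v u"
    and contr: "contractible (geom_realization (BI d (V - {v}) (induced_edges E (V - {v}))))"
  shows "contractible (geom_realization (BI d V E))"
proof -
  note G = simple_graphD[OF sg]
  have "u \<noteq> v"
    using G(5) v(2) by blast
  then have eqv: "geom_realization (BI d V E) homotopy_eqv geom_realization {\<sigma>\<in>BI d V E. v \<notin> \<sigma>}"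
    by (rule geom_realization_homotopy_eqv_delete_dominated[OF BI_downward_closed[OF G(1)]
          BI_dominated_by_simplicial_nbr[OF sg v]])
  have "BI d (V - {v}) (induced_edges E (V - {v})) = {\<sigma>\<in>BI d V E. v \<notin> \<sigma>}"
    using BI_induced[of "V - {v}" V d E] by (auto simp: BI_def)
  with contr show ?thesis
    using homotopy_equivalent_space_contractibility[OF eqv] by simp
qed

theorem mainTheorem13:
  fixes V :: "'a set" and E :: "'a \<Rightarrow> 'a \<Rightarrow> bool" and d :: nat
  assumes "simple_graph V E"
    and "connected_graph V E"
    and "chordal V E"
    and "d \<ge> 2"
  shows "contractible (geom_realization (BI d V E))"
  using assms(1-3)
proof (induction "card V" arbitrary: V E rule: less_induct)
  case less
  obtain v where v: "v \<in> V" "simplicial E v"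
    using chordal_has_simplicial_vertex[OF less.prems(1,3)] less.prems(2)
    unfolding connected_graph_def by blast
  show ?case
  proof (cases "V = {v}")
    case True
    then show ?thesis
      by (intro contractible_geom_realization_singleton) (auto simp: BI_def)
  next
    case False
    obtain u where "E v u"
      using connected_graph_has_nbr[OF less.prems(2) v(1) False] .
    have "card (V - {v}) < card V"
      using simple_graphD(1)[OF less.prems(1)] v(1) by (rule card_Diff1_less)
    then have "contractible (geom_realization (BI d (V - {v}) (induced_edges E (V - {v}))))"
      by (rule less.hyps[OF _ simple_graph_induced[OF less.prems(1) Diff_subset]
            connected_graph_delete_simplicial[OF less.prems(1,2) v(2) \<open>E v u\<close>]
            chordal_induced[OF less.prems(3) Diff_subset]])
    then show ?thesis
      by (rule contractible_BI_delete_simplicial[OF less.prems(1) v(2) \<open>E v u\<close>])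
  qed
qed

end
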